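(* (a) Let $X$ be a compact Hausdorff space and let $G$ be a subgroup of $\mathrm{Homeo}(X)$, carrying the topology $\sigma$ induced by the compact-open topology. Then the natural action $G\times X\to X$, $(g,x)\mapsto g(x)$, is topologically exact. (b) Let $(X,d)$ be a metric space and let $G$ be a subgroup of the isometry group $\mathrm{Is}(X,d)$, carrying the topology $\sigma$ of pointwise convergence. Then the natural action $G\times X\to X$ is topologically exact.
   Context: Let $\alpha: G\times X\to X$ be a continuous action of a Hausdorff topological group $(G,\sigma)$ on a Hausdorff topological space $(X,\tau)$. The action is called topologically exact ($t$-exact) if there is no group topology $\sigma'\subsetneq\sigma$ on $G$ (strictly coarser, not necessarily Hausdorff) such that $\alpha$ is continuous as a map $(G,\sigma')\times(X,\tau)\to(X,\tau)$. $\mathrm{Homeo}(X)$ denotes the group of all self-homeomorphisms of $X$. *)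

theory Defs
  imports "HOL-Analysis.Analysis"
begin

definition group_topology ::
  "'g set \<Rightarrow> ('g \<Rightarrow> 'g \<Rightarrow> 'g) \<Rightarrow> ('g \<Rightarrow> 'g) \<Rightarrow> 'g topology \<Rightarrow> bool" where
  "group_topology G mul inverse_op T \<longleftrightarrow>
     topspace T = G \<and>
     continuous_map (prod_topology T T) T (\<lambda>(g, h). mul g h) \<and>
     continuous_map T T inverse_op"

definition continuous_action ::
  "'g set \<Rightarrow> ('g \<Rightarrow> 'g \<Rightarrow> 'g) \<Rightarrow> ('g \<Rightarrow> 'g) \<Rightarrow> 'g \<Rightarrow> 'g topology \<Rightarrow>
   'x topology \<Rightarrow> ('g \<Rightarrow> 'x \<Rightarrow> 'x) \<Rightarrow> bool" where
  "continuous_action G mul inverse_op e T X act \<longleftrightarrow>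
     group_topology G mul inverse_op T \<and> Hausdorff_space T \<and> Hausdorff_space X \<and>
     (\<forall>x\<in>topspace X. act e x = x) \<and>
     (\<forall>g\<in>G. \<forall>h\<in>G. \<forall>x\<in>topspace X. act (mul g h) x = act g (act h x)) \<and>
     continuous_map (prod_topology T X) X (\<lambda>(g, x). act g x)"

definition t_exact ::
  "'g set \<Rightarrow> ('g \<Rightarrow> 'g \<Rightarrow> 'g) \<Rightarrow> ('g \<Rightarrow> 'g) \<Rightarrow> 'g \<Rightarrow> 'g topology \<Rightarrow>
   'x topology \<Rightarrow> ('g \<Rightarrow> 'x \<Rightarrow> 'x) \<Rightarrow> bool" where
  "t_exact G mul inverse_op e T X act \<longleftrightarrow>
     continuous_action G mul inverse_op e T X act \<and>
     \<not> (\<exists>T'. group_topology G mul inverse_op T' \<and>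
             (\<forall>U. openin T' U \<longrightarrow> openin T U) \<and>
             (\<exists>U. openin T U \<and> \<not> openin T' U) \<and>
             continuous_map (prod_topology T' X) X (\<lambda>(g, x). act g x))"

text \<open>Self-maps of a carrier S are normalised to be the identity outside S.\<close>
definition hinv :: "'a set \<Rightarrow> ('a \<Rightarrow> 'a) \<Rightarrow> ('a \<Rightarrow> 'a)" where
  "hinv S f = (\<lambda>x. if x \<in> S then inv_into S f x else x)"

definition Homeo :: "'a topology \<Rightarrow> ('a \<Rightarrow> 'a) set" where
  "Homeo X = {f. homeomorphic_map X X f \<and> (\<forall>x. x \<notin> topspace X \<longrightarrow> f x = x)}"

definition Isom :: "'a metric \<Rightarrow> ('a \<Rightarrow> 'a) set" where
  "Isom m = {f. f ` mspace m = mspace m \<and>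
     (\<forall>x\<in>mspace m. \<forall>y\<in>mspace m. mdist m (f x) (f y) = mdist m x y) \<and>
     (\<forall>x. x \<notin> mspace m \<longrightarrow> f x = x)}"

definition is_subgroup :: "'a set \<Rightarrow> ('a \<Rightarrow> 'a) set \<Rightarrow> ('a \<Rightarrow> 'a) set \<Rightarrow> bool" where
  "is_subgroup S H G \<longleftrightarrow> G \<subseteq> H \<and> id \<in> G \<and>
     (\<forall>f\<in>G. \<forall>g\<in>G. f \<circ> g \<in> G) \<and> (\<forall>f\<in>G. hinv S f \<in> G)"

text \<open>Compact-open topology restricted to G (subbase of sets [K,U]; K = {} gives G itself).\<close>
definition compact_open_topology :: "'a topology \<Rightarrow> ('a \<Rightarrow> 'a) set \<Rightarrow> ('a \<Rightarrow> 'a) topology" where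
  "compact_open_topology X G = topology_generated_by
     {{g \<in> G. g ` K \<subseteq> U} | K U. compactin X K \<and> openin X U}"

definition pointwise_topology :: "'a topology \<Rightarrow> ('a \<Rightarrow> 'a) set \<Rightarrow> ('a \<Rightarrow> 'a) topology" where
  "pointwise_topology X G = topology_generated_by
     ({G} \<union> {{g \<in> G. g x \<in> U} | x U. x \<in> topspace X \<and> openin X U})"

end

theory Submission
  imports Defs
begin

(* The compact-open topology on G is the coarsest topology for which the evaluation (g, x) |-> g x
   is continuous: by the tube lemma, continuity of the evaluation forces every subbasic set
   {g. g ` K \<subseteq> U} with K compact and U open to be open. So every group topology making the action
   continuous contains the compact-open topology, and a topology that is contained in the
   compact-open topology and already makes the action continuous admits no strictly coarser
   replacement. Both parts are of this kind: for compact Hausdorff X the compact-open topology is a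
   group topology on Homeo(X) with continuous action (Arens), and for isometries the pointwise
   topology is coarser than the compact-open one while equicontinuity makes the action and the
   inversion continuous. Hausdorffness comes for free from the continuity of point evaluations. *)

lemma continuous_map_into_topology_generated_by_locally:
  assumes "f ` topspace A \<subseteq> \<Union>S"
    and "\<And>s a. s \<in> S \<Longrightarrow> a \<in> topspace A \<Longrightarrow> f a \<in> s \<Longrightarrow>
           \<exists>V. openin A V \<and> a \<in> V \<and> f ` V \<subseteq> s"
  shows "continuous_map A (topology_generated_by S) f"
proof (rule continuous_on_generated_topo)
  fix s assume "s \<in> S"
  show "openin A (f -` s \<inter> topspace A)"
  proof (subst openin_subopen, intro ballI)
    fix a assume "a \<in> f -` s \<inter> topspace A"
    then obtain V where "openin A V" "a \<in> V" "f ` V \<subseteq> s"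
      using assms(2) \<open>s \<in> S\<close> by blast
    then show "\<exists>V. openin A V \<and> a \<in> V \<and> V \<subseteq> f -` s \<inter> topspace A"
      using openin_subset by blast
  qed
qed (use assms(1) in simp)

lemma continuous_map_prod_topology_locally:
  assumes "\<And>a b. a \<in> topspace A \<Longrightarrow> b \<in> topspace B \<Longrightarrow> f (a, b) \<in> topspace C"
    and "\<And>U a b. openin C U \<Longrightarrow> a \<in> topspace A \<Longrightarrow> b \<in> topspace B \<Longrightarrow> f (a, b) \<in> U \<Longrightarrow>
           \<exists>V W. openin A V \<and> openin B W \<and> a \<in> V \<and> b \<in> W \<and> f ` (V \<times> W) \<subseteq> U"
  shows "continuous_map (prod_topology A B) C f"
  unfolding continuous_map_eq_topcontinuous_at topcontinuous_at_def
proof (intro ballI conjI allI impI)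
  fix p U assume p: "p \<in> topspace (prod_topology A B)" and U: "openin C U \<and> f p \<in> U"
  obtain a b where ab: "p = (a, b)" "a \<in> topspace A" "b \<in> topspace B"
    using p by auto
  then obtain V W where VW: "openin A V" "openin B W" "a \<in> V" "b \<in> W" "f ` (V \<times> W) \<subseteq> U"
    using assms(2)[of U a b] U by blast
  show "\<exists>N. openin (prod_topology A B) N \<and> p \<in> N \<and> (\<forall>q\<in>N. f q \<in> U)"
  proof (intro exI conjI)
    show "openin (prod_topology A B) (V \<times> W)" using VW(1,2) by (simp add: openin_prod_Times_iff)
  qed (use VW ab in auto)
next
  show "f \<in> topspace (prod_topology A B) \<rightarrow> topspace C" if "p \<in> topspace (prod_topology A B)" for p
    using assms(1) by auto
qed

lemma continuous_map_evaluation_at: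
  assumes "continuous_map (prod_topology T X) X (\<lambda>(g, x). g x)" and "x \<in> topspace X"
  shows "continuous_map T X (\<lambda>g. g x)"
  using continuous_map_compose[OF continuous_map_pairedI[OF continuous_map_id
        continuous_map_const[THEN iffD2]] assms(1)] assms(2)
  by (simp add: o_def)

lemma Hausdorff_space_of_faithful_continuous_evaluation:
  assumes "Hausdorff_space X"
    and cont: "continuous_map (prod_topology T X) X (\<lambda>(g, x). g x)"
    and faithful: "\<And>g h. g \<in> topspace T \<Longrightarrow> h \<in> topspace T \<Longrightarrow> g \<noteq> h \<Longrightarrow>
                     \<exists>x\<in>topspace X. g x \<noteq> h x"
  shows "Hausdorff_space T"
  unfolding Hausdorff_space_def
proof (intro allI impI)
  fix g h assume gh: "g \<in> topspace T \<and> h \<in> topspace T \<and> g \<noteq> h"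
  then obtain x where x: "x \<in> topspace X" "g x \<noteq> h x" using faithful by blast
  have ev: "continuous_map T X (\<lambda>k. k x)" by (rule continuous_map_evaluation_at[OF cont x(1)])
  then have "g x \<in> topspace X" "h x \<in> topspace X"
    using gh continuous_map_image_subset_topspace by fastforce+
  then obtain U V where UV: "openin X U" "openin X V" "g x \<in> U" "h x \<in> V" "disjnt U V"
    using \<open>Hausdorff_space X\<close> x(2) unfolding Hausdorff_space_def by blast
  show "\<exists>U V. openin T U \<and> openin T V \<and> g \<in> U \<and> h \<in> V \<and> disjnt U V"
  proof (intro exI conjI)
    show "openin T {k \<in> topspace T. k x \<in> U}" "openin T {k \<in> topspace T. k x \<in> V}"
      using openin_continuous_map_preimage[OF ev] UV(1,2) by auto
    show "disjnt {k \<in> topspace T. k x \<in> U} {k \<in> topspace T. k x \<in> V}"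
      using UV(5) by (auto simp: disjnt_def)
  qed (use UV gh in auto)
qed

lemma topspace_compact_open_topology [simp]: "topspace (compact_open_topology X G) = G"
proof -
  have "G \<in> {{g \<in> G. g ` K \<subseteq> U} | K U. compactin X K \<and> openin X U}"
    by (rule CollectI, rule exI[of _ "{}"], rule exI[of _ "{}"]) auto
  then show ?thesis
    unfolding compact_open_topology_def topology_generated_by_topspace by blast
qed

lemma openin_compact_open_topology_subbasic:
  "compactin X K \<Longrightarrow> openin X U \<Longrightarrow> openin (compact_open_topology X G) {g \<in> G. g ` K \<subseteq> U}"
  unfolding compact_open_topology_def by (rule topology_generated_by_Basis) blast

lemma continuous_map_into_compact_open_topology:
  assumes "f ` topspace A \<subseteq> G"
    and "\<And>K U a. compactin X K \<Longrightarrow> openin X U \<Longrightarrow> a \<in> topspace A \<Longrightarrow> f a ` K \<subseteq> U \<Longrightarrow>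
           \<exists>V. openin A V \<and> a \<in> V \<and> (\<forall>b\<in>V. f b ` K \<subseteq> U)"
  shows "continuous_map A (compact_open_topology X G) f"
  unfolding compact_open_topology_def
proof (rule continuous_map_into_topology_generated_by_locally)
  show "f ` topspace A \<subseteq> \<Union> {{g \<in> G. g ` K \<subseteq> U} | K U. compactin X K \<and> openin X U}"
    using assms(1) topspace_compact_open_topology[of X G]
    unfolding compact_open_topology_def topology_generated_by_topspace by simp
next
  fix s a assume "s \<in> {{g \<in> G. g ` K \<subseteq> U} | K U. compactin X K \<and> openin X U}"
    and a: "a \<in> topspace A" "f a \<in> s"
  then obtain K U where s: "s = {g \<in> G. g ` K \<subseteq> U}" "compactin X K" "openin X U"
    by blast
  moreover have "f a ` K \<subseteq> U"
    using a(2) s(1) by simp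
  ultimately obtain V where V: "openin A V" "a \<in> V" "\<forall>b\<in>V. f b ` K \<subseteq> U"
    using assms(2) a(1) by metis
  moreover have "f ` V \<subseteq> s"
    unfolding s(1) using assms(1) openin_subset[OF V(1)] V(3) by blast
  ultimately show "\<exists>V. openin A V \<and> a \<in> V \<and> f ` V \<subseteq> s"
    by blast
qed

lemma compact_open_topology_coarsest:
  assumes cont: "continuous_map (prod_topology T X) X (\<lambda>(g, x). g x)"
    and "topspace T = G" and "openin (compact_open_topology X G) W"
  shows "openin T W"
proof -
  have subbasic: "openin T {g \<in> G. g ` K \<subseteq> U}" if K: "compactin X K" and U: "openin X U" for K U
  proof (subst openin_subopen, intro ballI)
    fix g assume g: "g \<in> {g \<in> G. g ` K \<subseteq> U}"
    let ?W = "{p \<in> topspace (prod_topology T X). (\<lambda>(g, x). g x) p \<in> U}"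
    have "openin (prod_topology T X) ?W" by (rule openin_continuous_map_preimage[OF cont U])
    moreover have "{g} \<times> K \<subseteq> ?W"
      using g \<open>topspace T = G\<close> compactin_subset_topspace[OF K] by auto
    ultimately obtain V1 V2 where "openin T V1" "g \<in> V1" "K \<subseteq> V2" "V1 \<times> V2 \<subseteq> ?W"
      using tube_lemma_right[OF _ K, of T ?W g] g \<open>topspace T = G\<close> by auto
    moreover have "V1 \<subseteq> {g \<in> G. g ` K \<subseteq> U}"
      using calculation openin_subset \<open>topspace T = G\<close> by fastforce
    ultimately show "\<exists>V. openin T V \<and> g \<in> V \<and> V \<subseteq> {g \<in> G. g ` K \<subseteq> U}"
      by blast
  qed
  show ?thesis
  proof (rule generate_topology_on_coarsest[of "openin T"])
    show "generate_topology_on {{g \<in> G. g ` K \<subseteq> U} | K U. compactin X K \<and> openin X U} W"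
      using assms(3) by (simp add: compact_open_topology_def openin_topology_generated_by_iff)
  qed (use subbasic in auto)
qed

lemma topspace_pointwise_topology [simp]: "topspace (pointwise_topology X G) = G"
  unfolding pointwise_topology_def topology_generated_by_topspace by blast

lemma openin_pointwise_topology_subbasic:
  assumes "x \<in> topspace X" and "openin X U"
  shows "openin (pointwise_topology X G) {g \<in> G. g x \<in> U}"
  unfolding pointwise_topology_def
  by (rule topology_generated_by_Basis, rule UnI2) (use assms in auto)

lemma continuous_map_into_pointwise_topology:
  assumes "f ` topspace A \<subseteq> G"
    and "\<And>x U a. x \<in> topspace X \<Longrightarrow> openin X U \<Longrightarrow> a \<in> topspace A \<Longrightarrow> f a x \<in> U \<Longrightarrow>
           \<exists>V. openin A V \<and> a \<in> V \<and> (\<forall>b\<in>V. f b x \<in> U)"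
  shows "continuous_map A (pointwise_topology X G) f"
  unfolding pointwise_topology_def
proof (rule continuous_map_into_topology_generated_by_locally)
  show "f ` topspace A \<subseteq> \<Union> ({G} \<union> {{g \<in> G. g x \<in> U} | x U. x \<in> topspace X \<and> openin X U})"
    using assms(1) by (simp add: le_supI1)
next
  fix s a assume "s \<in> {G} \<union> {{g \<in> G. g x \<in> U} | x U. x \<in> topspace X \<and> openin X U}"
    and a: "a \<in> topspace A" "f a \<in> s"
  then consider "s = G" | x U where "s = {g \<in> G. g x \<in> U}" "x \<in> topspace X" "openin X U"
    by blast
  then show "\<exists>V. openin A V \<and> a \<in> V \<and> f ` V \<subseteq> s"
  proof cases
    case 1
    then show ?thesis using assms(1) a(1) by blast
  next
    case (2 x U)
    have "f a x \<in> U"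
      using a(2) 2(1) by simp
    then obtain V where V: "openin A V" "a \<in> V" "\<forall>b\<in>V. f b x \<in> U"
      using assms(2)[OF 2(2,3) a(1)] by blast
    moreover have "f ` V \<subseteq> s"
      unfolding 2(1) using assms(1) openin_subset[OF V(1)] V(3) by blast
    ultimately show ?thesis
      by blast
  qed
qed

lemma openin_pointwise_imp_openin_compact_open_topology:
  assumes "openin (pointwise_topology X G) W"
  shows "openin (compact_open_topology X G) W"
proof (rule generate_topology_on_coarsest[of "openin (compact_open_topology X G)"])
  show "generate_topology_on ({G} \<union> {{g \<in> G. g x \<in> U} | x U. x \<in> topspace X \<and> openin X U}) W"
    using assms by (simp add: pointwise_topology_def openin_topology_generated_by_iff)
next
  fix s assume "s \<in> {G} \<union> {{g \<in> G. g x \<in> U} | x U. x \<in> topspace X \<and> openin X U}"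
  then consider "s = G" | x U where "s = {g \<in> G. g ` {x} \<subseteq> U}" "x \<in> topspace X" "openin X U"
    by auto
  then show "openin (compact_open_topology X G) s"
  proof cases
    case 1
    then show ?thesis using openin_topspace[of "compact_open_topology X G"] by simp
  next
    case (2 x U)
    then show ?thesis using openin_compact_open_topology_subbasic[of X "{x}" U G] by simp
  qed
qed simp

lemma continuous_map_compose_pointwise_topology:
  assumes "\<And>f g. f \<in> G \<Longrightarrow> g \<in> G \<Longrightarrow> f \<circ> g \<in> G"
    and action: "continuous_map (prod_topology (pointwise_topology X G) X) X (\<lambda>(g, x). g x)"
  shows "continuous_map (prod_topology (pointwise_topology X G) (pointwise_topology X G))
           (pointwise_topology X G) (\<lambda>(f, g). f \<circ> g)"
proof (rule continuous_map_into_pointwise_topology)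
  let ?PP = "prod_topology (pointwise_topology X G) (pointwise_topology X G)"
  show "(\<lambda>(f, g). f \<circ> g) ` topspace ?PP \<subseteq> G"
    using assms(1) by auto
  fix x U p
  assume x: "x \<in> topspace X" and U: "openin X U" and p: "p \<in> topspace ?PP"
    and pxU: "(\<lambda>(f, g). f \<circ> g) p x \<in> U"
  have cont: "continuous_map ?PP X (\<lambda>(f, g). f (g x))"
    using continuous_map_compose[OF continuous_map_pairedI[OF continuous_map_fst
        continuous_map_compose[OF continuous_map_snd continuous_map_evaluation_at[OF action x]]] action]
    by (simp add: case_prod_unfold o_def)
  show "\<exists>V. openin ?PP V \<and> p \<in> V \<and> (\<forall>q\<in>V. (\<lambda>(f, g). f \<circ> g) q x \<in> U)"
  proof (intro exI conjI)
    show "openin ?PP {q \<in> topspace ?PP. (\<lambda>(f, g). f (g x)) q \<in> U}"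
      using openin_continuous_map_preimage[OF cont U] .
  qed (use p pxU in auto)
qed

lemma t_exact_if_coarser_than_compact_open:
  assumes "Hausdorff_space X"
    and fixes_outside: "\<And>g x. g \<in> G \<Longrightarrow> x \<notin> topspace X \<Longrightarrow> g x = x"
    and group: "group_topology G (\<circ>) inverse_op T"
    and cont: "continuous_map (prod_topology T X) X (\<lambda>(g, x). g x)"
    and coarser: "\<And>W. openin T W \<Longrightarrow> openin (compact_open_topology X G) W"
  shows "t_exact G (\<circ>) inverse_op id T X (\<lambda>g x. g x)"
proof -
  have topT: "topspace T = G" using group by (simp add: group_topology_def)
  have "Hausdorff_space T"
  proof (rule Hausdorff_space_of_faithful_continuous_evaluation[OF \<open>Hausdorff_space X\<close> cont])
    fix g h assume "g \<in> topspace T" "h \<in> topspace T" "g \<noteq> h"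
    then show "\<exists>x\<in>topspace X. g x \<noteq> h x"
      using fixes_outside topT by (metis ext)
  qed
  then have "continuous_action G (\<circ>) inverse_op id T X (\<lambda>g x. g x)"
    using assms by (simp add: continuous_action_def)
  moreover have "openin T' W"
    if "group_topology G (\<circ>) inverse_op T'" "continuous_map (prod_topology T' X) X (\<lambda>(g, x). g x)"
       "openin T W" for T' W
    using that compact_open_topology_coarsest coarser
    by (metis group_topology_def)
  ultimately show ?thesis unfolding t_exact_def by blast
qed

lemma hinv_into: "g ` S = S \<Longrightarrow> y \<in> S \<Longrightarrow> hinv S g y \<in> S"
  by (simp add: hinv_def inv_into_into)

lemma f_hinv_f: "g ` S = S \<Longrightarrow> y \<in> S \<Longrightarrow> g (hinv S g y) = y"
  by (simp add: hinv_def f_inv_into_f)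

lemma hinv_image_subset_iff:
  assumes "bij_betw g S S" and "K \<subseteq> S"
  shows "hinv S g ` K \<subseteq> U \<longleftrightarrow> g ` (S - U) \<subseteq> S - K"
proof -
  have "hinv S g ` K = (inv_into S g) ` K"
    using assms(2) by (auto simp: hinv_def)
  also have "\<dots> = S \<inter> g -` K"
  proof
    show "inv_into S g ` K \<subseteq> S \<inter> g -` K"
      using assms by (auto simp: bij_betw_def f_inv_into_f intro!: inv_into_into)
    show "S \<inter> g -` K \<subseteq> inv_into S g ` K"
      using assms(1) by (auto simp: bij_betw_def) (metis image_eqI inv_into_f_f)
  qed
  finally show ?thesis
    using assms(1) by (auto simp: bij_betw_def)
qed

lemma compact_Hausdorff_space_open_with_compact_closure:
  assumes "compact_space X" and "Hausdorff_space X"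
    and "compactin X K" and "openin X W" and "K \<subseteq> W"
  obtains V where "openin X V" "K \<subseteq> V" "compactin X (X closure_of V)" "X closure_of V \<subseteq> W"
proof -
  have "normal_space X"
    using assms(1,2) by (simp add: compact_Hausdorff_or_regular_imp_normal_space)
  moreover have "closedin X K"
    using compactin_imp_closedin[OF assms(2,3)] .
  ultimately obtain V where "openin X V" "K \<subseteq> V" "X closure_of V \<subseteq> W"
    using assms(4,5) unfolding normal_space_alt by meson
  then show ?thesis
    using that closedin_compact_space[OF assms(1) closedin_closure_of] by blast
qed

locale homeomorphism_group =
  fixes X :: "'a topology" and G :: "('a \<Rightarrow> 'a) set"
  assumes compact: "compact_space X" and Hausdorff: "Hausdorff_space X"
    and subgroup: "is_subgroup (topspace X) (Homeo X) G"
begin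

lemma homeomorphic_map_mem: "g \<in> G \<Longrightarrow> homeomorphic_map X X g"
  using subgroup by (auto simp: is_subgroup_def Homeo_def)

lemma continuous_map_mem: "g \<in> G \<Longrightarrow> continuous_map X X g"
  using homeomorphic_imp_continuous_map homeomorphic_map_mem by blast

lemma fixes_outside: "g \<in> G \<Longrightarrow> x \<notin> topspace X \<Longrightarrow> g x = x"
  using subgroup by (auto simp: is_subgroup_def Homeo_def)

lemma comp_closed: "f \<in> G \<Longrightarrow> g \<in> G \<Longrightarrow> f \<circ> g \<in> G"
  using subgroup by (simp add: is_subgroup_def)

lemma hinv_closed: "g \<in> G \<Longrightarrow> hinv (topspace X) g \<in> G"
  using subgroup by (simp add: is_subgroup_def)

lemma continuous_map_action:
  "continuous_map (prod_topology (compact_open_topology X G) X) X (\<lambda>(g, x). g x)"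
proof (rule continuous_map_prod_topology_locally)
  fix g x assume "g \<in> topspace (compact_open_topology X G)" "x \<in> topspace X"
  then show "(\<lambda>(g, x). g x) (g, x) \<in> topspace X"
    using continuous_map_mem continuous_map_image_subset_topspace by fastforce
next
  fix U g0 x0 assume U: "openin X U" and g0: "g0 \<in> topspace (compact_open_topology X G)"
    and x0: "x0 \<in> topspace X" and "(\<lambda>(g, x). g x) (g0, x0) \<in> U"
  then have W: "openin X {x \<in> topspace X. g0 x \<in> U}" "{x0} \<subseteq> {x \<in> topspace X. g0 x \<in> U}"
    using openin_continuous_map_preimage[OF continuous_map_mem] by auto
  obtain V where V: "openin X V" "{x0} \<subseteq> V" "compactin X (X closure_of V)"
    "X closure_of V \<subseteq> {x \<in> topspace X. g0 x \<in> U}"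
    using compact_Hausdorff_space_open_with_compact_closure[OF compact Hausdorff _ W] x0
    by (metis compactin_sing)
  show "\<exists>N W. openin (compact_open_topology X G) N \<and> openin X W \<and> g0 \<in> N \<and> x0 \<in> W \<and>
          (\<lambda>(g, x). g x) ` (N \<times> W) \<subseteq> U"
  proof (intro exI conjI)
    show "openin (compact_open_topology X G) {g \<in> G. g ` (X closure_of V) \<subseteq> U}"
      using openin_compact_open_topology_subbasic[OF V(3) U] .
    show "(\<lambda>(g, x). g x) ` ({g \<in> G. g ` (X closure_of V) \<subseteq> U} \<times> V) \<subseteq> U"
      using closure_of_subset[OF openin_subset[OF V(1)]] by auto
  qed (use V g0 in auto)
qed

lemma continuous_map_compose:
  "continuous_map (prod_topology (compact_open_topology X G) (compact_open_topology X G))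
     (compact_open_topology X G) (\<lambda>(f, g). f \<circ> g)"
proof (rule continuous_map_into_compact_open_topology)
  let ?CC = "prod_topology (compact_open_topology X G) (compact_open_topology X G)"
  show "(\<lambda>(f, g). f \<circ> g) ` topspace ?CC \<subseteq> G"
    using comp_closed by auto
  fix K U p
  assume K: "compactin X K" and U: "openin X U" and p: "p \<in> topspace ?CC"
    and pKU: "(\<lambda>(f, g). f \<circ> g) p ` K \<subseteq> U"
  obtain f0 g0 where fg0: "p = (f0, g0)" "f0 \<in> G" "g0 \<in> G"
    using p by auto
  have W: "openin X {x \<in> topspace X. f0 x \<in> U}" "g0 ` K \<subseteq> {x \<in> topspace X. f0 x \<in> U}"
    using openin_continuous_map_preimage[OF continuous_map_mem[OF fg0(2)] U] pKU fg0(1)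
      continuous_map_image_subset_topspace[OF continuous_map_mem[OF fg0(3)]]
      compactin_subset_topspace[OF K]
    by auto
  obtain V where V: "openin X V" "g0 ` K \<subseteq> V" "compactin X (X closure_of V)"
    "X closure_of V \<subseteq> {x \<in> topspace X. f0 x \<in> U}"
    using compact_Hausdorff_space_open_with_compact_closure[OF compact Hausdorff
        image_compactin[OF K continuous_map_mem[OF fg0(3)]] W] .
  let ?N = "{f \<in> G. f ` (X closure_of V) \<subseteq> U} \<times> {g \<in> G. g ` K \<subseteq> V}"
  show "\<exists>N. openin ?CC N \<and> p \<in> N \<and> (\<forall>q\<in>N. (\<lambda>(f, g). f \<circ> g) q ` K \<subseteq> U)"
  proof (intro exI conjI)
    show "openin ?CC ?N"
      unfolding openin_prod_Times_iff
      using openin_compact_open_topology_subbasic[OF V(3) U]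
        openin_compact_open_topology_subbasic[OF K V(1)]
      by blast
    show "p \<in> ?N"
      using fg0 V(2,4) by auto
    show "\<forall>q\<in>?N. (\<lambda>(f, g). f \<circ> g) q ` K \<subseteq> U"
      using closure_of_subset[OF openin_subset[OF V(1)]] by fastforce
  qed
qed

lemma continuous_map_hinv:
  "continuous_map (compact_open_topology X G) (compact_open_topology X G) (hinv (topspace X))"
proof (rule continuous_map_into_compact_open_topology)
  show "hinv (topspace X) ` topspace (compact_open_topology X G) \<subseteq> G"
    using hinv_closed by auto
next
  fix K U g
  assume K: "compactin X K" and U: "openin X U" and g: "g \<in> topspace (compact_open_topology X G)"
    and gKU: "hinv (topspace X) g ` K \<subseteq> U"
  have swap:
    "hinv (topspace X) h ` K \<subseteq> U \<longleftrightarrow> h \<in> {h \<in> G. h ` (topspace X - U) \<subseteq> topspace X - K}"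
    if "h \<in> G" for h
    using hinv_image_subset_iff[OF _ compactin_subset_topspace[OF K]] homeomorphic_map_mem[OF that]
      homeomorphic_imp_injective_map homeomorphic_imp_surjective_map that
    by (metis (no_types, lifting) bij_betw_def mem_Collect_eq)
  have "openin (compact_open_topology X G) {h \<in> G. h ` (topspace X - U) \<subseteq> topspace X - K}"
  proof (rule openin_compact_open_topology_subbasic)
    show "compactin X (topspace X - U)"
      using closedin_compact_space[OF compact] U by blast
    show "openin X (topspace X - K)"
      using compactin_imp_closedin[OF Hausdorff K] by blast
  qed
  then show "\<exists>V. openin (compact_open_topology X G) V \<and> g \<in> V \<and>
               (\<forall>h\<in>V. hinv (topspace X) h ` K \<subseteq> U)"
    using swap g gKU by (intro exI[of _ "{h \<in> G. h ` (topspace X - U) \<subseteq> topspace X - K}"]) auto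
qed

lemma t_exact_compact_open:
  "t_exact G (\<circ>) (hinv (topspace X)) id (compact_open_topology X G) X (\<lambda>g x. g x)"
proof (rule t_exact_if_coarser_than_compact_open)
  show "group_topology G (\<circ>) (hinv (topspace X)) (compact_open_topology X G)"
    unfolding group_topology_def using continuous_map_compose continuous_map_hinv by simp
qed (use Hausdorff fixes_outside continuous_map_action in auto)

end

lemma openin_mball_of: "openin (mtopology_of m) (mball_of m x r)"
  by (simp add: Metric_space.openin_mball mball_of_def mtopology_of_def)

lemma openin_mtopology_of_mball_subset:
  "openin (mtopology_of m) U \<Longrightarrow> x \<in> U \<Longrightarrow> \<exists>r>0. mball_of m x r \<subseteq> U"
  by (simp add: Metric_space.openin_mtopology mball_of_def mtopology_of_def)

lemma mdist_self [simp]: "x \<in> mspace m \<Longrightarrow> mdist m x x = 0"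
  by simp

lemma Hausdorff_space_mtopology_of: "Hausdorff_space (mtopology_of m)"
  by (simp add: Metric_space.Hausdorff_space_mtopology mtopology_of_def)

locale isometry_group =
  fixes m :: "'a metric" and G :: "('a \<Rightarrow> 'a) set"
  assumes subgroup: "is_subgroup (mspace m) (Isom m) G"
begin

lemma mem_Isom: "g \<in> G \<Longrightarrow> g \<in> Isom m"
  using subgroup by (auto simp: is_subgroup_def)

lemma image_mspace: "g \<in> G \<Longrightarrow> g ` mspace m = mspace m"
  using mem_Isom by (simp add: Isom_def)

lemma mdist_image:
  "g \<in> G \<Longrightarrow> x \<in> mspace m \<Longrightarrow> y \<in> mspace m \<Longrightarrow> mdist m (g x) (g y) = mdist m x y"
  using mem_Isom by (simp add: Isom_def)

lemma fixes_outside: "g \<in> G \<Longrightarrow> x \<notin> mspace m \<Longrightarrow> g x = x"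
  using mem_Isom by (simp add: Isom_def)

lemma comp_closed: "f \<in> G \<Longrightarrow> g \<in> G \<Longrightarrow> f \<circ> g \<in> G"
  using subgroup by (simp add: is_subgroup_def)

lemma hinv_closed: "g \<in> G \<Longrightarrow> hinv (mspace m) g \<in> G"
  using subgroup by (simp add: is_subgroup_def)

lemma apply_in_mspace: "g \<in> G \<Longrightarrow> x \<in> mspace m \<Longrightarrow> g x \<in> mspace m"
  using image_mspace by blast

lemma hinv_in_mspace: "g \<in> G \<Longrightarrow> x \<in> mspace m \<Longrightarrow> hinv (mspace m) g x \<in> mspace m"
  by (rule hinv_into[OF image_mspace])

lemma apply_hinv: "g \<in> G \<Longrightarrow> x \<in> mspace m \<Longrightarrow> g (hinv (mspace m) g x) = x"
  by (rule f_hinv_f[OF image_mspace])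

lemma mdist_apply_le:
  assumes "g \<in> G" "z \<in> mspace m" "x \<in> mspace m" "y \<in> mspace m"
  shows "mdist m z (g y) \<le> mdist m z (g x) + mdist m x y"
  using mdist_triangle[of z m "g x" "g y"] mdist_image apply_in_mspace assms by simp

lemma continuous_map_action:
  "continuous_map (prod_topology (pointwise_topology (mtopology_of m) G) (mtopology_of m))
     (mtopology_of m) (\<lambda>(g, x). g x)"
proof (rule continuous_map_prod_topology_locally)
  fix g x
  assume "g \<in> topspace (pointwise_topology (mtopology_of m) G)" "x \<in> topspace (mtopology_of m)"
  then show "(\<lambda>(g, x). g x) (g, x) \<in> topspace (mtopology_of m)"
    using apply_in_mspace by simp
next
  fix U g0 x0 assume U: "openin (mtopology_of m) U"
    and g0: "g0 \<in> topspace (pointwise_topology (mtopology_of m) G)"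
    and x0: "x0 \<in> topspace (mtopology_of m)" and "(\<lambda>(g, x). g x) (g0, x0) \<in> U"
  then obtain r where r: "r > 0" "mball_of m (g0 x0) r \<subseteq> U"
    using openin_mtopology_of_mball_subset[OF U] by auto
  let ?N = "{g \<in> G. g x0 \<in> mball_of m (g0 x0) (r / 2)}"
  show "\<exists>N W. openin (pointwise_topology (mtopology_of m) G) N \<and> openin (mtopology_of m) W \<and>
          g0 \<in> N \<and> x0 \<in> W \<and> (\<lambda>(g, x). g x) ` (N \<times> W) \<subseteq> U"
  proof (intro exI conjI)
    show "openin (pointwise_topology (mtopology_of m) G) ?N"
      using openin_pointwise_topology_subbasic[OF x0 openin_mball_of] .
    show "(\<lambda>(g, x). g x) ` (?N \<times> mball_of m x0 (r / 2)) \<subseteq> U"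
    proof (rule image_subsetI)
      fix p assume "p \<in> ?N \<times> mball_of m x0 (r / 2)"
      then obtain g x where p: "p = (g, x)" "g \<in> G" and gx0: "g x0 \<in> mball_of m (g0 x0) (r / 2)"
        and x: "x \<in> mball_of m x0 (r / 2)"
        by auto
      then have "mdist m (g0 x0) (g x) < r"
        using mdist_apply_le[of g "g0 x0" x0 x] by simp
      then show "(\<lambda>(g, x). g x) p \<in> U"
        using r(2) x gx0 p apply_in_mspace by auto
    qed
  qed (use g0 x0 r apply_in_mspace openin_mball_of in auto)
qed

lemma continuous_map_hinv:
  "continuous_map (pointwise_topology (mtopology_of m) G) (pointwise_topology (mtopology_of m) G)
     (hinv (mspace m))"
proof (rule continuous_map_into_pointwise_topology)
  show "hinv (mspace m) ` topspace (pointwise_topology (mtopology_of m) G) \<subseteq> G"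
    using hinv_closed by auto
next
  fix x U f0
  assume x: "x \<in> topspace (mtopology_of m)" and U: "openin (mtopology_of m) U"
    and f0: "f0 \<in> topspace (pointwise_topology (mtopology_of m) G)"
    and f0xU: "hinv (mspace m) f0 x \<in> U"
  define y where "y = hinv (mspace m) f0 x"
  have y: "y \<in> mspace m" "f0 y = x"
    using hinv_in_mspace apply_hinv f0 x by (simp_all add: y_def)
  obtain r where r: "r > 0" "mball_of m y r \<subseteq> U"
    using openin_mtopology_of_mball_subset[OF U] f0xU y_def by blast
  let ?N = "{f \<in> G. f y \<in> mball_of m x r}"
  have hinv_in_U: "hinv (mspace m) f x \<in> U" if "f \<in> ?N" for f
  proof -
    define z where "z = hinv (mspace m) f x"
    have z: "z \<in> mspace m" "f z = x"
      using hinv_in_mspace apply_hinv that x by (simp_all add: z_def)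
    have "mdist m y z = mdist m x (f y)"
      using mdist_image[of f y z] that y z by (simp add: mdist_commute)
    then show ?thesis
      using that r y z by (auto simp: z_def)
  qed
  show "\<exists>V. openin (pointwise_topology (mtopology_of m) G) V \<and> f0 \<in> V \<and>
               (\<forall>f\<in>V. hinv (mspace m) f x \<in> U)"
  proof (intro exI conjI)
    show "openin (pointwise_topology (mtopology_of m) G) ?N"
      using y(1) by (intro openin_pointwise_topology_subbasic openin_mball_of) simp
    show "f0 \<in> ?N"
      using f0 x y r by simp
  qed (use hinv_in_U in blast)
qed

lemma t_exact_pointwise:
  "t_exact G (\<circ>) (hinv (mspace m)) id (pointwise_topology (mtopology_of m) G) (mtopology_of m)
     (\<lambda>g x. g x)"
proof (rule t_exact_if_coarser_than_compact_open)
  show "group_topology G (\<circ>) (hinv (mspace m)) (pointwise_topology (mtopology_of m) G)"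
    unfolding group_topology_def
    using continuous_map_compose_pointwise_topology[OF comp_closed continuous_map_action]
      continuous_map_hinv by simp
qed (use Hausdorff_space_mtopology_of fixes_outside continuous_map_action
       openin_pointwise_imp_openin_compact_open_topology in auto)

end

theorem lemma2p3:
  shows "(\<forall>(X :: 'a topology) G.
            compact_space X \<and> Hausdorff_space X \<and> is_subgroup (topspace X) (Homeo X) G \<longrightarrow>
            t_exact G (\<circ>) (hinv (topspace X)) id (compact_open_topology X G) X (\<lambda>g x. g x))
       \<and> (\<forall>(m :: 'b metric) G.
            is_subgroup (mspace m) (Isom m) G \<longrightarrow>
            t_exact G (\<circ>) (hinv (mspace m)) id
              (pointwise_topology (mtopology_of m) G) (mtopology_of m) (\<lambda>g x. g x))"
  by (auto intro: homeomorphism_group.t_exact_compact_open isometry_group.t_exact_pointwise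
      simp: homeomorphism_group_def isometry_group_def)

end
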